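(* Let $X$ be a finite simple connected graph with adjacency matrix $A$, and let $u \ne v$ be vertices such that $u$ is spectrally extremal and $u$ and $v$ are strongly cospectral, say $E_r e_v = \sigma_r E_r e_u$ with $\sigma_r \in \{+1,-1\}$ for each $\theta_r \in \Phi_u$. Let $p(x)$ be the polynomial of minimum degree with $p(\theta_r) = \sigma_r$ for all $\theta_r \in \Phi_u$ (so that $p(A)e_u = e_v$). Let $X'$ be the connected component of $X \setminus v$ containing $u$. Then, up to a nonzero constant factor, $p(x)$ is the minimal polynomial of $u$ with respect to $X'$, i.e. the monic polynomial $q$ of least degree such that $q(A(X'))e_u = 0$.
   Context: $A = \sum_r \theta_r E_r$ is the spectral decomposition of $A$ ($\theta_r$ distinct eigenvalues, $E_r$ orthogonal projections onto eigenspaces); $e_w$ is the standard basis vector of $w$. Eigenvalue support: $\Phi_u = \{\theta_r : E_r e_u \ne 0\}$; dual degree $d^*(u) = |\Phi_u|-1$; eccentricity $\varepsilon_u = \max_w d(u,w)$; $u$ is spectrally extremal if $\varepsilon_u = d^*(u)$. Vertices $u,v$ are strongly cospectral if $E_r e_u = \pm E_r e_v$ for every $r$. $A(X')$ denotes the adjacency matrix of $X'$, and $e_u$ is then the standard basis vector of $u$ in $\mathbb{R}^{V(X')}$. *)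

theory Defs
  imports "HOL-Computational_Algebra.Polynomial"
begin

definition simple_graph :: "'a set \<Rightarrow> ('a \<Rightarrow> 'a \<Rightarrow> bool) \<Rightarrow> bool" where
  "simple_graph V E \<longleftrightarrow> finite V \<and> (\<forall>x y. E x y \<longrightarrow> E y x) \<and> (\<forall>x. \<not> E x x)
     \<and> (\<forall>x y. E x y \<longrightarrow> x \<in> V \<and> y \<in> V)"

fun walk :: "'a set \<Rightarrow> ('a \<Rightarrow> 'a \<Rightarrow> bool) \<Rightarrow> nat \<Rightarrow> 'a \<Rightarrow> 'a \<Rightarrow> bool" where
  "walk V E 0 x y \<longleftrightarrow> x \<in> V \<and> x = y"
| "walk V E (Suc k) x y \<longleftrightarrow> x \<in> V \<and> (\<exists>z\<in>V. E x z \<and> walk V E k z y)"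

definition connected_graph :: "'a set \<Rightarrow> ('a \<Rightarrow> 'a \<Rightarrow> bool) \<Rightarrow> bool" where
  "connected_graph V E \<longleftrightarrow> V \<noteq> {} \<and> (\<forall>x\<in>V. \<forall>y\<in>V. \<exists>k. walk V E k x y)"

definition gdist :: "'a set \<Rightarrow> ('a \<Rightarrow> 'a \<Rightarrow> bool) \<Rightarrow> 'a \<Rightarrow> 'a \<Rightarrow> nat" where
  "gdist V E x y = (LEAST k. walk V E k x y)"

definition eccentricity :: "'a set \<Rightarrow> ('a \<Rightarrow> 'a \<Rightarrow> bool) \<Rightarrow> 'a \<Rightarrow> nat" where
  "eccentricity V E u = Max ((\<lambda>w. gdist V E u w) ` V)"

text \<open>Vectors in R^V are functions 'a => real vanishing outside V.\<close>
definition adj :: "('a \<Rightarrow> 'a \<Rightarrow> bool) \<Rightarrow> 'a \<Rightarrow> 'a \<Rightarrow> real" where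
  "adj E i j = (if E i j then 1 else 0)"

definition mvec :: "'a set \<Rightarrow> ('a \<Rightarrow> 'a \<Rightarrow> real) \<Rightarrow> ('a \<Rightarrow> real) \<Rightarrow> ('a \<Rightarrow> real)" where
  "mvec V M x = (\<lambda>i. if i \<in> V then (\<Sum>j\<in>V. M i j * x j) else 0)"

definition poly_mvec :: "'a set \<Rightarrow> ('a \<Rightarrow> 'a \<Rightarrow> real) \<Rightarrow> real poly \<Rightarrow> ('a \<Rightarrow> real) \<Rightarrow> ('a \<Rightarrow> real)" where
  "poly_mvec V M q x = (\<lambda>i. \<Sum>k\<le>degree q. coeff q k * ((mvec V M ^^ k) x) i)"

definition basis_vec :: "'a set \<Rightarrow> 'a \<Rightarrow> ('a \<Rightarrow> real)" where
  "basis_vec V u = (\<lambda>i. if i \<in> V \<and> i = u then 1 else 0)"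

definition eigspace :: "'a set \<Rightarrow> ('a \<Rightarrow> 'a \<Rightarrow> real) \<Rightarrow> real \<Rightarrow> ('a \<Rightarrow> real) set" where
  "eigspace V M \<theta> = {x. (\<forall>i. i \<notin> V \<longrightarrow> x i = 0) \<and> mvec V M x = (\<lambda>i. \<theta> * x i)}"

definition is_eigenvalue :: "'a set \<Rightarrow> ('a \<Rightarrow> 'a \<Rightarrow> real) \<Rightarrow> real \<Rightarrow> bool" where
  "is_eigenvalue V M \<theta> \<longleftrightarrow> (\<exists>x\<in>eigspace V M \<theta>. x \<noteq> (\<lambda>_. 0))"

definition eigproj :: "'a set \<Rightarrow> ('a \<Rightarrow> 'a \<Rightarrow> real) \<Rightarrow> real \<Rightarrow> ('a \<Rightarrow> real) \<Rightarrow> ('a \<Rightarrow> real)" where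
  "eigproj V M \<theta> y = (THE z. z \<in> eigspace V M \<theta> \<and>
      (\<forall>w\<in>eigspace V M \<theta>. (\<Sum>i\<in>V. (y i - z i) * w i) = 0))"

definition eig_support :: "'a set \<Rightarrow> ('a \<Rightarrow> 'a \<Rightarrow> bool) \<Rightarrow> 'a \<Rightarrow> real set" where
  "eig_support V E u = {\<theta>. is_eigenvalue V (adj E) \<theta> \<and>
      eigproj V (adj E) \<theta> (basis_vec V u) \<noteq> (\<lambda>_. 0)}"

definition dual_degree :: "'a set \<Rightarrow> ('a \<Rightarrow> 'a \<Rightarrow> bool) \<Rightarrow> 'a \<Rightarrow> nat" where
  "dual_degree V E u = card (eig_support V E u) - 1"

definition spectrally_extremal :: "'a set \<Rightarrow> ('a \<Rightarrow> 'a \<Rightarrow> bool) \<Rightarrow> 'a \<Rightarrow> bool" where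
  "spectrally_extremal V E u \<longleftrightarrow> eccentricity V E u = dual_degree V E u"

definition strongly_cospectral :: "'a set \<Rightarrow> ('a \<Rightarrow> 'a \<Rightarrow> bool) \<Rightarrow> 'a \<Rightarrow> 'a \<Rightarrow> bool" where
  "strongly_cospectral V E u v \<longleftrightarrow> (\<forall>\<theta>. is_eigenvalue V (adj E) \<theta> \<longrightarrow>
      eigproj V (adj E) \<theta> (basis_vec V u) = eigproj V (adj E) \<theta> (basis_vec V v) \<or>
      eigproj V (adj E) \<theta> (basis_vec V v) = (\<lambda>i. - eigproj V (adj E) \<theta> (basis_vec V u) i))"

text \<open>Vertex set of the connected component of X minus v containing u
 (the graph X' is the subgraph induced on it).\<close>
definition comp_minus :: "'a set \<Rightarrow> ('a \<Rightarrow> 'a \<Rightarrow> bool) \<Rightarrow> 'a \<Rightarrow> 'a \<Rightarrow> 'a set" where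
  "comp_minus V E v u = {w. \<exists>k. walk (V - {v}) E k u w}"

definition annihilates :: "'a set \<Rightarrow> ('a \<Rightarrow> 'a \<Rightarrow> bool) \<Rightarrow> 'a \<Rightarrow> real poly \<Rightarrow> bool" where
  "annihilates V E u q \<longleftrightarrow> poly_mvec V (adj E) q (basis_vec V u) = (\<lambda>_. 0)"

definition vertex_minpoly :: "'a set \<Rightarrow> ('a \<Rightarrow> 'a \<Rightarrow> bool) \<Rightarrow> 'a \<Rightarrow> real poly \<Rightarrow> bool" where
  "vertex_minpoly V E u q \<longleftrightarrow> lead_coeff q = 1 \<and> annihilates V E u q \<and>
     (\<forall>q'. lead_coeff q' = 1 \<and> annihilates V E u q' \<longrightarrow> degree q \<le> degree q')"

end

theory Submission
  imports Defs "HOL-Library.Function_Algebras" "HOL-Computational_Algebra.Fundamental_Theorem_Algebra"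
begin

text \<open>For a symmetric matrix the minimal annihilating polynomial of a vector x has simple real
  roots, so x is the sum of its eigenspace projections E_\<theta> x and f(A) x = \<Sum> f(\<theta>) E_\<theta> x.
  Strong cospectrality then gives p(A) e_u = e_v, and Lagrange interpolation gives
  deg p \<le> |\<Phi>_u| - 1 = \<epsilon>_u.
  Since (A^k e_u)_w counts walks from u to w, the vertex w at distance deg p from u on a geodesic
  to a farthest vertex has (p(A) e_u)_w \<noteq> 0; hence w = v and dist(u, v) = deg p.
  Up to length dist(u, v) the walk counts from u in X and in X' agree on X', so p(A(X')) e_u = 0,
  whereas for q \<noteq> 0 of smaller degree (q(A(X')) e_u)_w \<noteq> 0 at the vertex w at distance deg q
  on a shortest u-v path.\<close>

definition supported_on :: "'a set \<Rightarrow> ('a \<Rightarrow> real) \<Rightarrow> bool" where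
  "supported_on V x \<longleftrightarrow> (\<forall>i. i \<notin> V \<longrightarrow> x i = 0)"

definition symmetric_on :: "'a set \<Rightarrow> ('a \<Rightarrow> 'a \<Rightarrow> real) \<Rightarrow> bool" where
  "symmetric_on V M \<longleftrightarrow> (\<forall>i\<in>V. \<forall>j\<in>V. M i j = M j i)"

definition inner_on :: "'a set \<Rightarrow> ('a \<Rightarrow> real) \<Rightarrow> ('a \<Rightarrow> real) \<Rightarrow> real" where
  "inner_on V x y = (\<Sum>i\<in>V. x i * y i)"

lemma supported_on_basis_vec: "supported_on V (basis_vec V u)"
  by (simp add: supported_on_def basis_vec_def)

lemma fun_sum_apply: "(\<Sum>a\<in>A. f a) i = (\<Sum>a\<in>A. (f a i :: real))"
  by (induction A rule: infinite_finite_induct) auto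

subsection \<open>Polynomials in a matrix acting on vectors\<close>

lemma funpow_mvec_outside: "supported_on V x \<Longrightarrow> i \<notin> V \<Longrightarrow> (mvec V M ^^ k) x i = 0"
  by (cases k) (auto simp: supported_on_def mvec_def)

lemma mvec_sum: "mvec V M (\<lambda>i. \<Sum>k\<in>K. f k i) = (\<lambda>i. \<Sum>k\<in>K. mvec V M (f k) i)"
proof (cases "finite K")
  case True
  then show ?thesis
    by (auto simp: mvec_def sum_distrib_left intro!: ext sum.swap)
qed (auto simp: mvec_def)

lemma mvec_scale: "mvec V M (\<lambda>i. a * x i) = (\<lambda>i. a * mvec V M x i)"
  by (auto simp: mvec_def sum_distrib_left algebra_simps intro!: ext)

lemma mvec_diff: "mvec V M (\<lambda>i. x i - y i) = (\<lambda>i. mvec V M x i - mvec V M y i)"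
  by (auto simp: mvec_def sum_subtractf algebra_simps intro!: ext)

lemma mvec_zero: "mvec V M (\<lambda>i. 0) = (\<lambda>i. 0)"
  by (auto simp: mvec_def)

lemma funpow_mvec_sum:
  "(mvec V M ^^ n) (\<lambda>i. \<Sum>k\<in>K. f k i) = (\<lambda>i. \<Sum>k\<in>K. (mvec V M ^^ n) (f k) i)"
  by (induction n) (simp_all add: mvec_sum)

lemma funpow_mvec_zero: "(mvec V M ^^ n) (\<lambda>i. 0) = (\<lambda>i. 0)"
  by (induction n) (simp_all add: mvec_zero)

lemma poly_mvec_eq_sum_le:
  assumes "degree p \<le> n"
  shows "poly_mvec V M p x = (\<lambda>i. \<Sum>k\<le>n. coeff p k * (mvec V M ^^ k) x i)"
proof (rule ext)
  fix i
  show "poly_mvec V M p x i = (\<Sum>k\<le>n. coeff p k * (mvec V M ^^ k) x i)"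
    unfolding poly_mvec_def
    by (rule sum.mono_neutral_left) (use assms in \<open>auto simp: coeff_eq_0\<close>)
qed

lemma poly_mvec_add:
  "poly_mvec V M (p + q) x = (\<lambda>i. poly_mvec V M p x i + poly_mvec V M q x i)"
proof -
  define n where "n = max (degree p) (degree q)"
  have "degree (p + q) \<le> n" "degree p \<le> n" "degree q \<le> n"
    by (auto simp: n_def degree_add_le)
  then show ?thesis
    by (simp add: poly_mvec_eq_sum_le[of _ n] sum.distrib distrib_right)
qed

lemma poly_mvec_smult: "poly_mvec V M (smult c p) x = (\<lambda>i. c * poly_mvec V M p x i)"
  by (simp add: poly_mvec_eq_sum_le[of _ "degree p"] sum_distrib_left mult.assoc)

lemma poly_mvec_0 [simp]: "poly_mvec V M 0 x = (\<lambda>i. 0)"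
  by (simp add: poly_mvec_def)

lemma poly_mvec_zero_vec [simp]: "poly_mvec V M f (\<lambda>i. 0) = (\<lambda>i. 0)"
  by (simp add: poly_mvec_def funpow_mvec_zero)

lemma poly_mvec_pCons:
  "poly_mvec V M (pCons a p) x = (\<lambda>i. a * x i + mvec V M (poly_mvec V M p x) i)"
proof -
  have "poly_mvec V M (pCons a p) x
      = (\<lambda>i. \<Sum>k\<le>Suc (degree p). coeff (pCons a p) k * (mvec V M ^^ k) x i)"
    by (rule poly_mvec_eq_sum_le) (simp add: degree_pCons_le)
  also have "\<dots> = (\<lambda>i. a * x i + (\<Sum>k\<le>degree p. coeff p k * (mvec V M ^^ Suc k) x i))"
    by (simp only: sum.atMost_Suc_shift) simp
  also have "\<dots> = (\<lambda>i. a * x i + mvec V M (poly_mvec V M p x) i)"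
    by (simp add: poly_mvec_def mvec_sum mvec_scale)
  finally show ?thesis .
qed

lemma poly_mvec_const: "poly_mvec V M [:c:] x = (\<lambda>i. c * x i)"
  by (simp add: poly_mvec_pCons mvec_zero)

lemma poly_mvec_1: "poly_mvec V M 1 x = x"
  by (simp add: one_pCons poly_mvec_pCons mvec_zero)

lemma poly_mvec_linear_factor: "poly_mvec V M [:-\<theta>, 1:] x = (\<lambda>i. mvec V M x i - \<theta> * x i)"
  by (simp add: poly_mvec_pCons mvec_zero)

lemma poly_mvec_vec_sum:
  "poly_mvec V M p (\<lambda>i. \<Sum>k\<in>K. f k i) = (\<lambda>i. \<Sum>k\<in>K. poly_mvec V M p (f k) i)"
  by (auto simp: poly_mvec_def funpow_mvec_sum sum_distrib_left intro!: ext sum.swap)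

lemma poly_mvec_mult: "poly_mvec V M (p * q) x = poly_mvec V M p (poly_mvec V M q x)"
  by (induction p) (simp_all add: mult_pCons_left poly_mvec_add poly_mvec_smult poly_mvec_pCons)

lemma poly_mvec_sum: "poly_mvec V M (\<Sum>k\<in>K. f k) x = (\<lambda>i. \<Sum>k\<in>K. poly_mvec V M (f k) x i)"
  by (induction K rule: infinite_finite_induct) (simp_all add: poly_mvec_add)

lemma poly_mvec_monom: "poly_mvec V M (monom c k) x = (\<lambda>i. c * (mvec V M ^^ k) x i)"
proof -
  have "poly_mvec V M (monom c k) x = (\<lambda>i. \<Sum>m\<le>k. coeff (monom c k) m * (mvec V M ^^ m) x i)"
    by (rule poly_mvec_eq_sum_le[OF degree_monom_le])
  also have "\<dots> = (\<lambda>i. \<Sum>m\<le>k. if m = k then c * (mvec V M ^^ m) x i else 0)"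
    by (intro ext sum.cong) auto
  finally show ?thesis by simp
qed

lemma poly_mvec_eigenvector:
  assumes "mvec V M w = (\<lambda>i. \<theta> * w i)"
  shows "poly_mvec V M f w = (\<lambda>i. poly f \<theta> * w i)"
proof (induction f)
  case (pCons a p)
  then show ?case
    by (simp only: poly_mvec_pCons pCons.IH mvec_scale assms) (auto simp: algebra_simps)
qed simp

lemma supported_on_poly_mvec: "supported_on V x \<Longrightarrow> supported_on V (poly_mvec V M f x)"
  by (auto simp: supported_on_def poly_mvec_def funpow_mvec_outside[unfolded supported_on_def])

lemma poly_mvec_commute: "poly_mvec V M p (poly_mvec V M q x) = poly_mvec V M q (poly_mvec V M p x)"
  by (metis mult.commute poly_mvec_mult)

subsection \<open>Symmetric matrices\<close>

lemma inner_on_mvec: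
  assumes "symmetric_on V M"
  shows "inner_on V (mvec V M x) y = inner_on V x (mvec V M y)"
proof -
  have "inner_on V (mvec V M x) y = (\<Sum>i\<in>V. \<Sum>j\<in>V. M i j * x j * y i)"
    by (simp add: inner_on_def mvec_def sum_distrib_right)
  also have "\<dots> = (\<Sum>j\<in>V. \<Sum>i\<in>V. M i j * x j * y i)"
    by (rule sum.swap)
  also have "\<dots> = (\<Sum>j\<in>V. \<Sum>i\<in>V. x j * (M j i * y i))"
    using assms unfolding symmetric_on_def by (intro sum.cong refl) (auto simp: algebra_simps)
  also have "\<dots> = inner_on V x (mvec V M y)"
    by (simp add: inner_on_def mvec_def sum_distrib_left)
  finally show ?thesis .
qed

lemma inner_on_poly_mvec:
  assumes "symmetric_on V M"
  shows "inner_on V (poly_mvec V M f x) y = inner_on V x (poly_mvec V M f y)"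
proof (induction f arbitrary: y)
  case (pCons a p)
  have "inner_on V (poly_mvec V M (pCons a p) x) y
      = a * inner_on V x y + inner_on V (mvec V M (poly_mvec V M p x)) y"
    by (simp add: poly_mvec_pCons inner_on_def sum.distrib sum_distrib_left algebra_simps)
  also have "\<dots> = a * inner_on V x y + inner_on V x (poly_mvec V M p (mvec V M y))"
    by (simp add: inner_on_mvec[OF assms] pCons.IH)
  also have "poly_mvec V M p (mvec V M y) = mvec V M (poly_mvec V M p y)"
    using poly_mvec_commute[of V M p "[:0, 1:]" y] by (simp add: poly_mvec_pCons mvec_zero)
  also have "a * inner_on V x y + inner_on V x (mvec V M (poly_mvec V M p y))
      = inner_on V x (poly_mvec V M (pCons a p) y)"
    by (simp add: poly_mvec_pCons inner_on_def sum.distrib sum_distrib_left algebra_simps)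
  finally show ?case .
qed (simp add: inner_on_def)

lemma inner_on_self_nonneg: "inner_on V x x \<ge> 0"
  by (simp add: inner_on_def sum_nonneg)

lemma inner_on_self_pos:
  assumes "finite V" "supported_on V x" "x \<noteq> (\<lambda>_. 0)"
  shows "inner_on V x x > 0"
proof -
  obtain i where "x i \<noteq> 0" using assms(3) by auto
  with assms(2) have "i \<in> V" by (auto simp: supported_on_def)
  then have "inner_on V x x \<noteq> 0"
    using \<open>x i \<noteq> 0\<close> by (auto simp: inner_on_def sum_nonneg_eq_0_iff[OF assms(1)])
  with inner_on_self_nonneg show ?thesis by (simp add: order_less_le)
qed

lemma eigproj_eqI:
  assumes "finite V" "z \<in> eigspace V M \<theta>"
    and "\<forall>w\<in>eigspace V M \<theta>. (\<Sum>i\<in>V. (y i - z i) * w i) = 0"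
  shows "eigproj V M \<theta> y = z"
  unfolding eigproj_def
proof (rule the_equality)
  fix z' assume z': "z' \<in> eigspace V M \<theta> \<and> (\<forall>w\<in>eigspace V M \<theta>. (\<Sum>i\<in>V. (y i - z' i) * w i) = 0)"
  define d where "d = (\<lambda>i. z' i - z i)"
  have d: "d \<in> eigspace V M \<theta>" and "supported_on V d"
    using z' assms(2) by (auto simp: eigspace_def supported_on_def d_def mvec_diff algebra_simps)
  have "inner_on V d d = (\<Sum>i\<in>V. (y i - z i) * d i) - (\<Sum>i\<in>V. (y i - z' i) * d i)"
    by (simp add: inner_on_def d_def sum_subtractf[symmetric] algebra_simps)
  also have "\<dots> = 0" using d z' assms(3) by simp
  finally have "d = (\<lambda>_. 0)"
    using inner_on_self_pos[OF assms(1) \<open>supported_on V d\<close>] by force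
  then show "z' = z" by (auto simp: d_def fun_eq_iff)
qed (use assms in blast)

lemma eigproj_zero_vec: "finite V \<Longrightarrow> eigproj V M \<theta> (\<lambda>_. 0) = (\<lambda>_. 0)"
  by (rule eigproj_eqI) (auto simp: eigspace_def mvec_zero)

lemma eigenvectors_orthogonal:
  assumes "symmetric_on V M" "mvec V M y = (\<lambda>i. \<theta>' * y i)" "mvec V M w = (\<lambda>i. \<theta> * w i)"
    and "\<theta> \<noteq> \<theta>'"
  shows "inner_on V y w = 0"
proof -
  have "\<theta>' * inner_on V y w = inner_on V (mvec V M y) w"
    by (simp add: assms(2) inner_on_def sum_distrib_left algebra_simps)
  also have "\<dots> = inner_on V y (mvec V M w)" by (rule inner_on_mvec[OF assms(1)])
  also have "\<dots> = \<theta> * inner_on V y w"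
    by (simp add: assms(3) inner_on_def sum_distrib_left algebra_simps)
  finally show ?thesis using assms(4) by simp
qed

subsection \<open>Lagrange interpolation\<close>

definition lagrange_basis :: "real set \<Rightarrow> real \<Rightarrow> real poly" where
  "lagrange_basis R \<theta> = smult (inverse (\<Prod>j\<in>R-{\<theta>}. \<theta> - j)) (\<Prod>j\<in>R-{\<theta>}. [:-j, 1:])"

lemma poly_lagrange_basis:
  assumes "finite R" "\<theta> \<in> R" "\<theta>' \<in> R"
  shows "poly (lagrange_basis R \<theta>) \<theta>' = (if \<theta>' = \<theta> then 1 else 0)"
proof (cases "\<theta>' = \<theta>")
  case False
  then have "(\<Prod>j\<in>R-{\<theta>}. \<theta>' - j) = 0" using assms by (auto simp: prod_zero_iff)
  then show ?thesis using False by (simp add: lagrange_basis_def poly_prod)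
qed (use assms in \<open>simp add: lagrange_basis_def poly_prod prod_zero_iff\<close>)

lemma degree_lagrange_basis:
  assumes "finite R" "\<theta> \<in> R"
  shows "degree (lagrange_basis R \<theta>) \<le> card R - 1"
proof -
  have "degree (\<Prod>j\<in>R-{\<theta>}. [:-j, 1:]) = card (R - {\<theta>})"
    by (subst degree_prod_eq_sum_degree) auto
  then show ?thesis
    using assms degree_smult_le[of _ "\<Prod>j\<in>R-{\<theta>}. [:-j, 1:]"] by (simp add: lagrange_basis_def)
qed

lemma degree_interpolant_le:
  assumes "finite R"
  shows "degree (\<Sum>\<theta>\<in>R. smult (s \<theta>) (lagrange_basis R \<theta>)) \<le> card R - 1"
proof (rule degree_sum_le[OF assms])
  fix \<theta> assume "\<theta> \<in> R"
  then show "degree (smult (s \<theta>) (lagrange_basis R \<theta>)) \<le> card R - 1"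
    by (rule order_trans[OF degree_smult_le degree_lagrange_basis[OF assms]])
qed

lemma poly_interpolant:
  assumes "finite R" "x \<in> R"
  shows "poly (\<Sum>\<theta>\<in>R. smult (s \<theta>) (lagrange_basis R \<theta>)) x = s x"
proof -
  have "poly (\<Sum>\<theta>\<in>R. smult (s \<theta>) (lagrange_basis R \<theta>)) x
      = (\<Sum>\<theta>\<in>R. s \<theta> * (if x = \<theta> then 1 else 0))"
    using assms by (simp add: poly_sum poly_lagrange_basis)
  also have "\<dots> = (\<Sum>\<theta>\<in>R. if \<theta> = x then s \<theta> else 0)" by (rule sum.cong) auto
  also have "\<dots> = s x" using assms by simp
  finally show ?thesis .
qed

lemma interpolating_poly_exists:
  fixes R :: "real set"
  assumes "finite R"
  shows "\<exists>q. degree q \<le> card R - 1 \<and> (\<forall>\<theta>\<in>R. poly q \<theta> = s \<theta>)"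
  using degree_interpolant_le[OF assms] poly_interpolant[OF assms] by blast

lemma sum_lagrange_basis:
  assumes "finite R" "R \<noteq> {}"
  shows "(\<Sum>\<theta>\<in>R. lagrange_basis R \<theta>) = 1"
proof -
  have "card R > 0" using assms by (simp add: card_gt_0_iff)
  show ?thesis
  proof (rule poly_eqI_degree[of R])
    show "poly (\<Sum>\<theta>\<in>R. lagrange_basis R \<theta>) x = poly 1 x" if "x \<in> R" for x
      using poly_interpolant[OF assms(1) that, of "\<lambda>_. 1"] by simp
    show "card R > degree (\<Sum>\<theta>\<in>R. lagrange_basis R \<theta>)"
      using degree_interpolant_le[OF assms(1), of "\<lambda>_. 1"] \<open>card R > 0\<close> by simp
  qed (use \<open>card R > 0\<close> in simp)
qed

lemma linear_factor_mult_lagrange_basis: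
  assumes "finite R" "\<theta> \<in> R"
  shows "[:-\<theta>, 1:] * lagrange_basis R \<theta>
       = smult (inverse (\<Prod>j\<in>R-{\<theta>}. \<theta> - j)) (\<Prod>j\<in>R. [:-j, 1:])"
  using assms by (simp add: lagrange_basis_def prod.remove)

subsection \<open>The minimal annihilating polynomial of a vector\<close>

lemma annihilating_poly_exists:
  assumes fin: "finite V" and sx: "supported_on V x"
  shows "\<exists>f. f \<noteq> 0 \<and> poly_mvec V M f x = (\<lambda>_. 0)"
proof -
  define N where "N = card V"
  define P where "P = (\<lambda>k. (mvec V M ^^ k) x)"
  show ?thesis
  proof (cases "inj_on P {..N}")
    case False
    then obtain i j where ij: "i \<noteq> j" "P i = P j"
      unfolding inj_on_def by auto
    define f where "f = monom (1::real) i + monom (-1) j"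
    have "coeff f i = 1" using ij(1) by (simp add: f_def)
    then have "f \<noteq> 0" by auto
    moreover have "poly_mvec V M f x = (\<lambda>_. 0)"
      using ij(2) by (simp add: f_def P_def poly_mvec_add poly_mvec_monom)
    ultimately show ?thesis by blast
  next
    case True
    interpret VS: vector_space "\<lambda>(c::real) (f::'a\<Rightarrow>real). (\<lambda>i. c * f i)"
      by unfold_locales (auto simp: fun_eq_iff algebra_simps)
    define S where "S = basis_vec V ` V"
    define T where "T = P ` {..N}"
    have cardT: "card T = Suc N" using True by (simp add: T_def card_image)
    have cardS: "card S \<le> N" unfolding S_def N_def by (rule card_image_le[OF fin])
    have span: "y \<in> VS.span S" if "supported_on V y" for y
    proof -
      have "y = (\<Sum>j\<in>V. (\<lambda>i. y j * basis_vec V j i))"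
      proof (rule ext)
        fix i
        show "y i = (\<Sum>j\<in>V. (\<lambda>i. y j * basis_vec V j i)) i"
        proof (cases "i \<in> V")
          case True
          have "(\<Sum>j\<in>V. y j * basis_vec V j i) = (\<Sum>j\<in>V. if j = i then y j else 0)"
            by (intro sum.cong) (auto simp: basis_vec_def)
          then show ?thesis using True fin by (simp add: fun_sum_apply)
        qed (use that in \<open>simp add: fun_sum_apply basis_vec_def supported_on_def\<close>)
      qed
      also have "\<dots> \<in> VS.span S"
        by (intro VS.span_sum VS.span_scale VS.span_base) (auto simp: S_def)
      finally show ?thesis .
    qed
    have "VS.dependent T"
    proof (rule ccontr)
      assume "VS.independent T"
      moreover have "T \<subseteq> VS.span S"
        using span funpow_mvec_outside[OF sx] by (auto simp: T_def P_def supported_on_def)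
      ultimately have "card T \<le> card S"
        using VS.independent_span_bound[of S T] fin by (auto simp: S_def)
      with cardT cardS show False by simp
    qed
    then obtain c where c: "\<exists>v\<in>T. c v \<noteq> 0" "(\<Sum>v\<in>T. (\<lambda>i. c v * v i)) = 0"
      using VS.dependent_finite[of T] by (auto simp: T_def)
    define f where "f = (\<Sum>k\<le>N. monom (c (P k)) k)"
    have coeff_f: "coeff f k = (if k \<le> N then c (P k) else 0)" for k
      by (simp add: f_def coeff_sum)
    have "degree f \<le> N"
      unfolding f_def by (intro degree_sum_le) (auto intro: order_trans[OF degree_monom_le])
    have "f \<noteq> 0"
    proof
      assume "f = 0"
      then have "c (P k) = 0" if "k \<le> N" for k using coeff_f[of k] that by simp
      with c(1) show False by (auto simp: T_def)
    qed
    moreover have "poly_mvec V M f x = (\<lambda>_. 0)"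
    proof (rule ext)
      fix i
      have "poly_mvec V M f x i = (\<Sum>k\<le>N. c (P k) * P k i)"
        by (simp add: poly_mvec_eq_sum_le[OF \<open>degree f \<le> N\<close>] coeff_f P_def)
      also have "\<dots> = (\<Sum>v\<in>T. c v * v i)"
        unfolding T_def by (subst sum.reindex[OF True]) simp
      also have "\<dots> = 0" using fun_cong[OF c(2), of i] by (simp add: fun_sum_apply)
      finally show "poly_mvec V M f x i = 0" .
    qed
    ultimately show ?thesis by blast
  qed
qed

lemma poly_map_of_real_add:
  "poly (map_poly complex_of_real (p + q)) z
     = poly (map_poly complex_of_real p) z + poly (map_poly complex_of_real q) z"
proof (induction p arbitrary: q)
  case (pCons a p)
  show ?case
  proof (cases q)
    case (pCons b q')
    then show ?thesis
      using pCons.IH[of q'] by (simp add: map_poly_pCons algebra_simps)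
  qed
qed simp

lemma poly_map_of_real_mult:
  "poly (map_poly complex_of_real (p * q)) z
     = poly (map_poly complex_of_real p) z * poly (map_poly complex_of_real q) z"
  by (induction p)
    (simp_all add: map_poly_pCons poly_map_of_real_add map_poly_smult algebra_simps)

lemma poly_map_of_real_of_real:
  "poly (map_poly complex_of_real p) (of_real t) = of_real (poly p t)"
  by (induction p) (simp_all add: map_poly_pCons)

context
  fixes V :: "'a set" and M x and \<mu> :: "real poly"
  assumes fin: "finite V" and sym: "symmetric_on V M" and sx: "supported_on V x"
    and nonzero: "\<mu> \<noteq> 0" and annihilates: "poly_mvec V M \<mu> x = (\<lambda>_. 0)"
    and minimal: "\<And>g. g \<noteq> 0 \<Longrightarrow> poly_mvec V M g x = (\<lambda>_. 0) \<Longrightarrow> degree \<mu> \<le> degree g"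
begin

lemma poly_mvec_below_minimal_nonzero:
  "g \<noteq> 0 \<Longrightarrow> degree g < degree \<mu> \<Longrightarrow> poly_mvec V M g x \<noteq> (\<lambda>_. 0)"
  using minimal by force

text \<open>A nonreal root a + bi would give a real quadratic factor q with
  q(M) y = 0 for some y \<noteq> 0, whence |(M - a) y|^2 = -b^2 |y|^2 < 0.\<close>
lemma minimal_annihilator_roots_real:
  assumes "poly (map_poly complex_of_real \<mu>) z = 0"
  shows "Im z = 0"
proof (rule ccontr)
  assume "Im z \<noteq> 0"
  define a where "a = Re z"
  define b where "b = Im z"
  define q where "q = [:a^2 + b^2, -2*a, 1:]"
  have "q \<noteq> 0" and "degree q = 2" by (simp_all add: q_def)
  have "poly (map_poly complex_of_real q) z = 0"
    by (simp add: q_def map_poly_pCons a_def b_def complex_eq_iff power2_eq_square algebra_simps)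
  define r where "r = \<mu> mod q"
  define s where "s = \<mu> div q"
  have \<mu>_eq: "\<mu> = s * q + r" by (simp add: r_def s_def)
  have r_root: "poly (map_poly complex_of_real r) z = 0"
    using assms \<mu>_eq \<open>poly (map_poly complex_of_real q) z = 0\<close>
    by (simp add: poly_map_of_real_add poly_map_of_real_mult)
  have "degree r \<le> 1" using degree_mod_less[OF \<open>q \<noteq> 0\<close>, of \<mu>] \<open>degree q = 2\<close> by (auto simp: r_def)
  then have r_lin: "r = [:coeff r 0, coeff r 1:]"
    by (intro poly_eqI) (auto simp: coeff_pCons coeff_eq_0 split: nat.split)
  have "poly (map_poly complex_of_real [:coeff r 0, coeff r 1:]) z = 0"
    using r_root r_lin by metis
  then have lin_root: "of_real (coeff r 0) + z * of_real (coeff r 1) = 0"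
    by (simp add: map_poly_pCons)
  have "Im z * coeff r 1 = 0"
    using arg_cong[OF lin_root, of Im] by simp
  then have "r = 0"
    using \<open>Im z \<noteq> 0\<close> lin_root r_lin by simp
  then have \<mu>_factor: "\<mu> = s * q" using \<mu>_eq by simp
  then have "s \<noteq> 0" using nonzero by auto
  have "degree s < degree \<mu>"
    using \<mu>_factor \<open>s \<noteq> 0\<close> \<open>q \<noteq> 0\<close> \<open>degree q = 2\<close> by (simp add: degree_mult_eq)
  define y where "y = poly_mvec V M s x"
  have "y \<noteq> (\<lambda>_. 0)" using poly_mvec_below_minimal_nonzero[OF \<open>s \<noteq> 0\<close> \<open>degree s < degree \<mu>\<close>]
    by (simp add: y_def)
  have "supported_on V y" unfolding y_def by (rule supported_on_poly_mvec[OF sx])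
  have qy: "poly_mvec V M q y = (\<lambda>_. 0)"
    using annihilates \<mu>_factor by (simp add: y_def poly_mvec_mult[symmetric] mult.commute)
  define w where "w = poly_mvec V M [:-a, 1:] y"
  have "inner_on V w w = inner_on V y (poly_mvec V M ([:-a, 1:] * [:-a, 1:]) y)"
    by (simp only: w_def inner_on_poly_mvec[OF sym] poly_mvec_mult)
  also have "[:-a, 1:] * [:-a, 1:] = q + [:-(b^2):]"
    by (simp add: q_def power2_eq_square algebra_simps)
  also have "poly_mvec V M (q + [:-(b^2):]) y = (\<lambda>i. -(b^2) * y i)"
    by (simp add: poly_mvec_add qy poly_mvec_const)
  also have "inner_on V y (\<lambda>i. -(b^2) * y i) = -(b^2) * inner_on V y y"
    by (simp add: inner_on_def sum_distrib_left algebra_simps)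
  finally have "inner_on V w w = -(b^2) * inner_on V y y" .
  moreover have "inner_on V y y > 0"
    by (rule inner_on_self_pos[OF fin \<open>supported_on V y\<close> \<open>y \<noteq> (\<lambda>_. 0)\<close>])
  moreover have "b^2 > 0" using \<open>Im z \<noteq> 0\<close> by (simp add: b_def)
  ultimately have "inner_on V w w < 0" by (simp add: mult_pos_pos)
  with inner_on_self_nonneg[of V w] show False by simp
qed

text \<open>If (X - \<theta>)^2 h = \<mu>, then y = ((X - \<theta>) h)(M) x is nonzero by minimality, yet
  |y|^2 = \<langle>x, (h \<mu>)(M) x\<rangle> = 0.\<close>
lemma minimal_annihilator_roots_simple:
  "\<not> [:-\<theta>, 1:] * [:-\<theta>, 1:] dvd \<mu>"
proof
  assume "[:-\<theta>, 1:] * [:-\<theta>, 1:] dvd \<mu>"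
  then obtain h where h: "\<mu> = [:-\<theta>, 1:] * [:-\<theta>, 1:] * h" by (auto elim: dvdE)
  define g where "g = [:-\<theta>, 1:] * h"
  have "h \<noteq> 0" using h nonzero by auto
  then have "g \<noteq> 0" by (simp add: g_def del: mult_pCons_left)
  have "degree \<mu> = degree g + 1"
    using h \<open>h \<noteq> 0\<close> by (simp add: g_def degree_mult_eq del: mult_pCons_left)
  define y where "y = poly_mvec V M g x"
  have "y \<noteq> (\<lambda>_. 0)"
    using poly_mvec_below_minimal_nonzero[OF \<open>g \<noteq> 0\<close>] \<open>degree \<mu> = degree g + 1\<close>
    by (simp add: y_def)
  have "inner_on V y y = inner_on V x (poly_mvec V M (g * g) x)"
    by (simp add: y_def inner_on_poly_mvec[OF sym] poly_mvec_mult)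
  also have "g * g = h * \<mu>" unfolding h g_def by (simp only: mult_ac)
  also have "poly_mvec V M (h * \<mu>) x = (\<lambda>_. 0)"
    by (simp add: poly_mvec_mult annihilates)
  finally have "inner_on V y y = 0" by (simp add: inner_on_def)
  with inner_on_self_pos[OF fin supported_on_poly_mvec[OF sx] \<open>y \<noteq> (\<lambda>_. 0)\<close>[unfolded y_def]]
  show False by (simp add: y_def)
qed

lemma divisor_of_minimal_annihilator_has_root:
  assumes "g dvd \<mu>" "degree g \<ge> 1"
  shows "\<exists>\<theta>. poly g \<theta> = 0"
proof -
  have "\<not> constant (poly (map_poly complex_of_real g))"
    using assms(2) by (simp add: constant_degree degree_map_poly)
  then obtain z where z: "poly (map_poly complex_of_real g) z = 0"
    using fundamental_theorem_of_algebra by blast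
  obtain k where "\<mu> = g * k" using assms(1) by (auto elim: dvdE)
  then have "poly (map_poly complex_of_real \<mu>) z = 0"
    by (simp add: poly_map_of_real_mult z)
  then have "z = of_real (Re z)"
    using minimal_annihilator_roots_real by (simp add: complex_eq_iff)
  then have "poly g (Re z) = 0"
    using z by (metis poly_map_of_real_of_real of_real_eq_0_iff)
  then show ?thesis by blast
qed

lemma monic_divisor_of_minimal_annihilator_eq_prod:
  "g dvd \<mu> \<Longrightarrow> lead_coeff g = 1 \<Longrightarrow> g = (\<Prod>\<theta>\<in>{\<theta>. poly g \<theta> = 0}. [:-\<theta>, 1:])"
proof (induction "degree g" arbitrary: g rule: less_induct)
  case less
  show ?case
  proof (cases "degree g = 0")
    case True
    then have "g = 1" using less.prems(2) by (auto elim: degree_eq_zeroE simp: one_pCons)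
    then show ?thesis by simp
  next
    case False
    then obtain \<theta> where "poly g \<theta> = 0"
      using divisor_of_minimal_annihilator_has_root[OF less.prems(1)] by auto
    then obtain g' where g': "g = [:-\<theta>, 1:] * g'"
      using poly_eq_0_iff_dvd by (blast elim: dvdE)
    have "g' \<noteq> 0" using g' less.prems(2) by auto
    have "degree g' < degree g"
      using g' \<open>g' \<noteq> 0\<close> by (simp add: degree_mult_eq del: mult_pCons_left)
    moreover have "g' dvd \<mu>" using less.prems(1) g' dvd_mult_right by blast
    moreover have "lead_coeff g' = 1"
      using g' less.prems(2) by (simp add: lead_coeff_mult del: mult_pCons_left)
    ultimately have IH: "g' = (\<Prod>\<theta>\<in>{\<theta>. poly g' \<theta> = 0}. [:-\<theta>, 1:])"
      by (rule less.hyps)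
    have "poly g' \<theta> \<noteq> 0"
    proof
      assume "poly g' \<theta> = 0"
      then obtain g'' where g'': "g' = [:-\<theta>, 1:] * g''"
        using poly_eq_0_iff_dvd by (blast elim: dvdE)
      have "g = ([:-\<theta>, 1:] * [:-\<theta>, 1:]) * g''" by (simp only: g' g'' mult.assoc)
      then have "[:-\<theta>, 1:] * [:-\<theta>, 1:] dvd \<mu>"
        using less.prems(1) by (metis dvdI dvd_trans)
      with minimal_annihilator_roots_simple show False by blast
    qed
    moreover have "{t. poly g t = 0} = insert \<theta> {t. poly g' t = 0}"
      using g' by (auto simp del: mult_pCons_left)
    ultimately have "(\<Prod>t\<in>{t. poly g t = 0}. [:-t, 1:]) = [:-\<theta>, 1:] * g'"
      by (subst IH) (simp add: prod.insert[OF poly_roots_finite[OF \<open>g' \<noteq> 0\<close>]] del: mult_pCons_left)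
    with g' show ?thesis by simp
  qed
qed

end

subsection \<open>Spectral decomposition\<close>

lemma spectral_root_set_exists:
  assumes fin: "finite V" and sym: "symmetric_on V M" and sx: "supported_on V x"
    and x0: "x \<noteq> (\<lambda>_. 0)"
  shows "\<exists>R. finite R \<and> R \<noteq> {} \<and> poly_mvec V M (\<Prod>\<theta>\<in>R. [:-\<theta>, 1:]) x = (\<lambda>_. 0)
           \<and> (\<forall>\<theta>\<in>R. poly_mvec V M (lagrange_basis R \<theta>) x \<noteq> (\<lambda>_. 0))"
proof -
  obtain f where "f \<noteq> 0 \<and> poly_mvec V M f x = (\<lambda>_. 0)"
    using annihilating_poly_exists[OF fin sx] by blast
  then obtain \<mu> where \<mu>: "\<mu> \<noteq> 0 \<and> poly_mvec V M \<mu> x = (\<lambda>_. 0)"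
    and minimal: "\<And>g. g \<noteq> 0 \<and> poly_mvec V M g x = (\<lambda>_. 0) \<Longrightarrow> degree \<mu> \<le> degree g"
    using ex_has_least_nat[of "\<lambda>f. f \<noteq> 0 \<and> poly_mvec V M f x = (\<lambda>_. 0)" f degree] by blast
  define \<mu>1 where "\<mu>1 = smult (inverse (lead_coeff \<mu>)) \<mu>"
  have "lead_coeff \<mu>1 = 1" "degree \<mu>1 = degree \<mu>" using \<mu> by (simp_all add: \<mu>1_def)
  have "\<mu>1 dvd \<mu>" using \<mu> by (simp add: \<mu>1_def smult_dvd_iff)
  define R where "R = {\<theta>. poly \<mu>1 \<theta> = 0}"
  have \<mu>1_eq: "\<mu>1 = (\<Prod>\<theta>\<in>R. [:-\<theta>, 1:])"
    unfolding R_def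
    by (rule monic_divisor_of_minimal_annihilator_eq_prod[OF fin sym sx _ _ _ \<open>\<mu>1 dvd \<mu>\<close>])
      (use \<mu> minimal \<open>lead_coeff \<mu>1 = 1\<close> in auto)
  have "finite R" unfolding R_def
    by (rule poly_roots_finite) (use \<open>lead_coeff \<mu>1 = 1\<close> in auto)
  have card_R: "card R = degree \<mu>"
    using \<open>degree \<mu>1 = degree \<mu>\<close> \<mu>1_eq by (simp add: degree_prod_eq_sum_degree)
  have "degree \<mu> \<noteq> 0"
  proof
    assume "degree \<mu> = 0"
    then obtain a where "\<mu> = [:a:]" by (elim degree_eq_zeroE)
    with \<mu> x0 show False by (auto simp: poly_mvec_const fun_eq_iff)
  qed
  then have "R \<noteq> {}" using card_R by auto
  moreover have "poly_mvec V M \<mu>1 x = (\<lambda>_. 0)" using \<mu> by (simp add: \<mu>1_def poly_mvec_smult)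
  moreover have "poly_mvec V M (lagrange_basis R \<theta>) x \<noteq> (\<lambda>_. 0)" if "\<theta> \<in> R" for \<theta>
  proof -
    have "lagrange_basis R \<theta> \<noteq> 0"
      using poly_lagrange_basis[OF \<open>finite R\<close> that that] by auto
    moreover have "degree (lagrange_basis R \<theta>) < degree \<mu>"
      using degree_lagrange_basis[OF \<open>finite R\<close> that] card_R \<open>degree \<mu> \<noteq> 0\<close> by simp
    ultimately show ?thesis using minimal by force
  qed
  ultimately show ?thesis using \<open>finite R\<close> \<mu>1_eq by auto
qed

definition spectral_support :: "'a set \<Rightarrow> ('a \<Rightarrow> 'a \<Rightarrow> real) \<Rightarrow> ('a \<Rightarrow> real) \<Rightarrow> real set" where
  "spectral_support V M x = {\<theta>. is_eigenvalue V M \<theta> \<and> eigproj V M \<theta> x \<noteq> (\<lambda>_. 0)}"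

context
  fixes V :: "'a set" and M x and R :: "real set"
  assumes fin: "finite V" and sym: "symmetric_on V M" and sx: "supported_on V x"
    and fin_R: "finite R" and R_nonempty: "R \<noteq> {}"
    and annihilates: "poly_mvec V M (\<Prod>\<theta>\<in>R. [:-\<theta>, 1:]) x = (\<lambda>_. 0)"
    and components_nonzero: "\<forall>\<theta>\<in>R. poly_mvec V M (lagrange_basis R \<theta>) x \<noteq> (\<lambda>_. 0)"
begin

lemma lagrange_component_eigenvector:
  assumes "\<theta> \<in> R"
  shows "mvec V M (poly_mvec V M (lagrange_basis R \<theta>) x)
       = (\<lambda>i. \<theta> * poly_mvec V M (lagrange_basis R \<theta>) x i)"
proof -
  have "poly_mvec V M [:-\<theta>, 1:] (poly_mvec V M (lagrange_basis R \<theta>) x)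
      = poly_mvec V M ([:-\<theta>, 1:] * lagrange_basis R \<theta>) x"
    by (simp only: poly_mvec_mult)
  also have "\<dots> = (\<lambda>_. 0)"
    by (simp only: linear_factor_mult_lagrange_basis[OF fin_R assms] poly_mvec_smult annihilates) simp
  finally show ?thesis unfolding poly_mvec_linear_factor by (auto simp: fun_eq_iff dest: fun_cong)
qed

lemma sum_lagrange_components: "x = (\<lambda>i. \<Sum>\<theta>\<in>R. poly_mvec V M (lagrange_basis R \<theta>) x i)"
  using poly_mvec_sum[of V M "lagrange_basis R" R x]
  by (simp add: sum_lagrange_basis[OF fin_R R_nonempty] poly_mvec_1)

lemma lagrange_component_in_eigspace:
  "\<theta> \<in> R \<Longrightarrow> poly_mvec V M (lagrange_basis R \<theta>) x \<in> eigspace V M \<theta>"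
  using lagrange_component_eigenvector supported_on_poly_mvec[OF sx]
  by (auto simp: eigspace_def supported_on_def)

lemma other_components_orthogonal:
  assumes "w \<in> eigspace V M \<theta>"
  shows "(\<Sum>i\<in>V. (\<Sum>\<theta>'\<in>R-{\<theta>}. poly_mvec V M (lagrange_basis R \<theta>') x i) * w i) = 0"
proof -
  have "(\<Sum>i\<in>V. (\<Sum>\<theta>'\<in>R-{\<theta>}. poly_mvec V M (lagrange_basis R \<theta>') x i) * w i)
      = (\<Sum>\<theta>'\<in>R-{\<theta>}. inner_on V (poly_mvec V M (lagrange_basis R \<theta>') x) w)"
    unfolding inner_on_def sum_distrib_right by (rule sum.swap)
  also have "\<dots> = 0"
  proof (rule sum.neutral, rule ballI)
    fix \<theta>' assume "\<theta>' \<in> R - {\<theta>}"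
    then show "inner_on V (poly_mvec V M (lagrange_basis R \<theta>') x) w = 0"
      using eigenvectors_orthogonal[OF sym lagrange_component_eigenvector[of \<theta>'], of w \<theta>] assms
      by (auto simp: eigspace_def)
  qed
  finally show ?thesis .
qed

lemma eigproj_eq_lagrange_component:
  "eigproj V M \<theta> x = (if \<theta> \<in> R then poly_mvec V M (lagrange_basis R \<theta>) x else (\<lambda>_. 0))"
proof (cases "\<theta> \<in> R")
  case True
  have "x i - poly_mvec V M (lagrange_basis R \<theta>) x i
      = (\<Sum>\<theta>'\<in>R-{\<theta>}. poly_mvec V M (lagrange_basis R \<theta>') x i)" for i
    using fun_cong[OF sum_lagrange_components, of i] sum.remove[OF fin_R True, of "\<lambda>\<theta>'. poly_mvec V M (lagrange_basis R \<theta>') x i"]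
    by simp
  then show ?thesis
    using True other_components_orthogonal
    by (simp add: eigproj_eqI[OF fin lagrange_component_in_eigspace])
next
  case False
  then have "R - {\<theta>} = R" by blast
  then have "x i - 0 = (\<Sum>\<theta>'\<in>R-{\<theta>}. poly_mvec V M (lagrange_basis R \<theta>') x i)" for i
    using fun_cong[OF sum_lagrange_components, of i] by simp
  then have "eigproj V M \<theta> x = (\<lambda>_. 0)"
    using other_components_orthogonal
    by (intro eigproj_eqI[OF fin]) (simp_all add: eigspace_def mvec_zero)
  with False show ?thesis by simp
qed

lemma spectral_support_eq: "spectral_support V M x = R"
  using eigproj_eq_lagrange_component components_nonzero lagrange_component_in_eigspace
  by (auto simp: spectral_support_def is_eigenvalue_def split: if_splits)

end

theorem spectral_decomposition:
  assumes fin: "finite V" and sym: "symmetric_on V M" and sx: "supported_on V x"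
  shows "finite (spectral_support V M x)"
    and "poly_mvec V M f x = (\<lambda>i. \<Sum>\<theta>\<in>spectral_support V M x. poly f \<theta> * eigproj V M \<theta> x i)"
proof -
  have "finite (spectral_support V M x) \<and>
      poly_mvec V M f x = (\<lambda>i. \<Sum>\<theta>\<in>spectral_support V M x. poly f \<theta> * eigproj V M \<theta> x i)"
  proof (cases "x = (\<lambda>_. 0)")
    case True
    then show ?thesis by (simp add: spectral_support_def eigproj_zero_vec[OF fin])
  next
    case False
    then obtain R where R: "finite R" "R \<noteq> {}" "poly_mvec V M (\<Prod>\<theta>\<in>R. [:-\<theta>, 1:]) x = (\<lambda>_. 0)"
        "\<forall>\<theta>\<in>R. poly_mvec V M (lagrange_basis R \<theta>) x \<noteq> (\<lambda>_. 0)"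
      using spectral_root_set_exists[OF fin sym sx] by blast
    note components = spectral_support_eq[OF fin sym sx R] sum_lagrange_components[OF fin sym sx R]
      lagrange_component_eigenvector[OF fin sym sx R] eigproj_eq_lagrange_component[OF fin sym sx R]
    have "poly_mvec V M f x = (\<lambda>i. \<Sum>\<theta>\<in>R. poly_mvec V M f (poly_mvec V M (lagrange_basis R \<theta>) x) i)"
      by (subst components(2)) (rule poly_mvec_vec_sum)
    also have "\<dots> = (\<lambda>i. \<Sum>\<theta>\<in>R. poly f \<theta> * eigproj V M \<theta> x i)"
      by (intro ext sum.cong refl) (simp add: poly_mvec_eigenvector components(3,4))
    finally show ?thesis using components(1) R(1) by simp
  qed
  then show "finite (spectral_support V M x)"
    and "poly_mvec V M f x = (\<lambda>i. \<Sum>\<theta>\<in>spectral_support V M x. poly f \<theta> * eigproj V M \<theta> x i)"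
    by auto
qed

lemma poly_mvec_eq_if_eigproj_scaled:
  assumes fin: "finite V" and sym: "symmetric_on V M"
    and sx: "supported_on V x" and sy: "supported_on V y"
    and support: "spectral_support V M y \<subseteq> spectral_support V M x"
    and scaled: "\<forall>\<theta>\<in>spectral_support V M x. eigproj V M \<theta> y = (\<lambda>i. poly p \<theta> * eigproj V M \<theta> x i)"
  shows "poly_mvec V M p x = y"
proof -
  note decomp_x = spectral_decomposition[OF fin sym sx]
  have "y = (\<lambda>i. \<Sum>\<theta>\<in>spectral_support V M y. eigproj V M \<theta> y i)"
    using spectral_decomposition(2)[OF fin sym sy, of 1] by (simp add: poly_mvec_1)
  also have "\<dots> = (\<lambda>i. \<Sum>\<theta>\<in>spectral_support V M x. eigproj V M \<theta> y i)"
    using support decomp_x(1)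
    by (intro ext sum.mono_neutral_left) (auto simp: spectral_support_def)
  also have "\<dots> = poly_mvec V M p x"
    using scaled by (simp add: decomp_x(2))
  finally show ?thesis by simp
qed

lemma walk_in: "walk W E k x y \<Longrightarrow> x \<in> W \<and> y \<in> W"
  by (induction k arbitrary: x) auto

lemma walk_mono: "walk W E k x y \<Longrightarrow> W \<subseteq> W' \<Longrightarrow> walk W' E k x y"
  by (induction k arbitrary: x) auto

lemma walk_append: "walk W E a x y \<Longrightarrow> walk W E b y z \<Longrightarrow> walk W E (a + b) x z"
  by (induction a arbitrary: x) auto

lemma walk_split: "walk W E (a + b) x z \<Longrightarrow> \<exists>y. walk W E a x y \<and> walk W E b y z"
proof (induction a arbitrary: x)
  case 0 then show ?case using walk_in[OF 0] by auto
next
  case (Suc a)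
  then obtain y where "x \<in> W" "y \<in> W" "E x y" "walk W E (a + b) y z" by auto
  with Suc.IH show ?case by fastforce
qed

lemma walk_snoc: "walk W E (Suc k) x y \<longleftrightarrow> (\<exists>z. walk W E k x z \<and> E z y \<and> y \<in> W)"
proof
  assume "walk W E (Suc k) x y"
  then obtain z where "walk W E k x z" "walk W E 1 z y"
    using walk_split[of W E k 1 x y] by auto
  then show "\<exists>z. walk W E k x z \<and> E z y \<and> y \<in> W" by auto
next
  assume "\<exists>z. walk W E k x z \<and> E z y \<and> y \<in> W"
  then obtain z where z: "walk W E k x z" "E z y" "y \<in> W" by auto
  have "walk W E 1 z y" using z walk_in[OF z(1)] by simp
  from walk_append[OF z(1) this] show "walk W E (Suc k) x y" by simp
qed

lemma walk_sym:
  assumes "\<forall>x y. E x y \<longrightarrow> E y x"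
  shows "walk W E k x y \<Longrightarrow> walk W E k y x"
proof (induction k arbitrary: x)
  case (Suc k)
  then obtain z where "x \<in> W" "E x z" "walk W E k z y" by auto
  with Suc.IH assms show ?case unfolding walk_snoc by blast
qed simp

lemma geodesic_split:
  assumes "walk W E d u v" "\<forall>k<d. \<not> walk W E k u v" "t \<le> d"
  obtains w where "walk W E t u w" "\<forall>k<t. \<not> walk W E k u w" "walk W E (d - t) w v"
proof -
  obtain w where w: "walk W E t u w" "walk W E (d - t) w v"
    using walk_split[of W E t "d - t" u v] assms by auto
  have "\<not> walk W E k u w" if "k < t" for k
  proof
    assume "walk W E k u w"
    then have "walk W E (k + (d - t)) u v" using w(2) by (rule walk_append)
    moreover have "k + (d - t) < d" using that assms(3) by linarith
    ultimately show False using assms(2) by blast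
  qed
  with w that show thesis by blast
qed

lemma eccentricity_geodesic:
  assumes "simple_graph V E" "connected_graph V E" "u \<in> V"
  obtains w where "walk V E (eccentricity V E u) u w" "\<forall>k<eccentricity V E u. \<not> walk V E k u w"
proof -
  have "eccentricity V E u \<in> gdist V E u ` V"
    unfolding eccentricity_def
    using assms by (intro Max_in) (auto simp: simple_graph_def)
  then obtain w where "w \<in> V" "gdist V E u w = eccentricity V E u" by auto
  moreover have "\<exists>k. walk V E k u w"
    using assms(2,3) \<open>w \<in> V\<close> by (simp add: connected_graph_def)
  then have "walk V E (gdist V E u w) u w" "\<forall>k<gdist V E u w. \<not> walk V E k u w"
    unfolding gdist_def by (auto intro: LeastI_ex dest: not_less_Least)
  ultimately show thesis using that by simp
qed

subsection \<open>Walk counts\<close>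

lemma funpow_adj_basis_vec:
  assumes "finite W"
  shows "(mvec W (adj E) ^^ k) (basis_vec W u) i \<ge> 0
    \<and> ((mvec W (adj E) ^^ k) (basis_vec W u) i > 0 \<longleftrightarrow> walk W E k i u)"
proof (induction k arbitrary: i)
  case (Suc k)
  let ?N = "(mvec W (adj E) ^^ k) (basis_vec W u)"
  have "adj E i j \<ge> 0" for j by (simp add: adj_def[of E i j])
  then have terms_nonneg: "\<forall>j\<in>W. adj E i j * ?N j \<ge> 0"
    using Suc.IH by (simp add: mult_nonneg_nonneg)
  have "(\<Sum>j\<in>W. adj E i j * ?N j) > 0 \<longleftrightarrow> (\<exists>j\<in>W. adj E i j * ?N j > 0)"
  proof
    assume pos: "(\<Sum>j\<in>W. adj E i j * ?N j) > 0"
    show "\<exists>j\<in>W. adj E i j * ?N j > 0"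
    proof (rule ccontr)
      assume "\<not> (\<exists>j\<in>W. adj E i j * ?N j > 0)"
      then have "(\<Sum>j\<in>W. adj E i j * ?N j) \<le> 0" by (simp add: sum_nonpos not_less)
      with pos show False by simp
    qed
  next
    assume "\<exists>j\<in>W. adj E i j * ?N j > 0"
    then obtain j where "j \<in> W" "adj E i j * ?N j > 0" by blast
    then show "(\<Sum>j\<in>W. adj E i j * ?N j) > 0"
      using terms_nonneg by (intro sum_pos2[OF assms]) auto
  qed
  also have "\<dots> \<longleftrightarrow> (\<exists>j\<in>W. E i j \<and> walk W E k j u)"
  proof -
    have "adj E i j * ?N j > 0 \<longleftrightarrow> E i j \<and> walk W E k j u" for j
      using Suc.IH[of j] by (simp add: adj_def[of E i j])
    then show ?thesis by blast
  qed
  moreover have "(mvec W (adj E) ^^ Suc k) (basis_vec W u) i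
      = (if i \<in> W then \<Sum>j\<in>W. adj E i j * ?N j else 0)"
    by (simp add: mvec_def[of W "adj E" ?N])
  ultimately show ?case using terms_nonneg by (auto intro: sum_nonneg)
qed (auto simp: basis_vec_def)

lemma poly_mvec_adj_geodesic_end:
  assumes "finite W" "\<forall>x y. E x y \<longrightarrow> E y x" "q \<noteq> 0"
    and "walk W E (degree q) u w" "\<forall>k<degree q. \<not> walk W E k u w"
  shows "poly_mvec W (adj E) q (basis_vec W u) w \<noteq> 0"
proof -
  define N where "N k = (mvec W (adj E) ^^ k) (basis_vec W u) w" for k
  have N_below: "N k = 0" if "k < degree q" for k
  proof -
    have "\<not> walk W E k w u" using assms(5) that walk_sym[OF assms(2), of W k w u] by auto
    then show ?thesis
      using funpow_adj_basis_vec[OF assms(1), where E = E and k = k and u = u and i = w]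
      by (auto simp: N_def)
  qed
  have "poly_mvec W (adj E) q (basis_vec W u) w = (\<Sum>k<Suc (degree q). coeff q k * N k)"
    by (simp add: poly_mvec_def N_def lessThan_Suc_atMost)
  also have "\<dots> = lead_coeff q * N (degree q)"
    using N_below by (simp add: sum.lessThan_Suc)
  finally have "poly_mvec W (adj E) q (basis_vec W u) w = lead_coeff q * N (degree q)" .
  moreover have "N (degree q) > 0"
    using funpow_adj_basis_vec[OF assms(1)] walk_sym[OF assms(2,4)] by (simp add: N_def)
  ultimately show ?thesis using assms(3) by simp
qed

lemma geodesic_to_image_vertex:
  assumes graph: "simple_graph V E" and conn: "connected_graph V E" and "u \<in> V" "v \<in> V"
    and image: "poly_mvec V (adj E) p (basis_vec V u) = basis_vec V v"
    and deg: "degree p \<le> eccentricity V E u"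
  shows "walk V E (degree p) u v" "\<forall>k<degree p. \<not> walk V E k u v"
proof -
  have "p \<noteq> 0"
    using fun_cong[OF image, of v] \<open>v \<in> V\<close> by (auto simp: basis_vec_def)
  obtain w0 where "walk V E (eccentricity V E u) u w0" "\<forall>k<eccentricity V E u. \<not> walk V E k u w0"
    using eccentricity_geodesic[OF graph conn \<open>u \<in> V\<close>] by blast
  from geodesic_split[OF this deg]
  obtain w where w: "walk V E (degree p) u w" "\<forall>k<degree p. \<not> walk V E k u w" .
  have "poly_mvec V (adj E) p (basis_vec V u) w \<noteq> 0"
    using graph \<open>p \<noteq> 0\<close> w by (intro poly_mvec_adj_geodesic_end) (auto simp: simple_graph_def)
  then have "basis_vec V v w \<noteq> 0" by (simp add: image)
  then have "w = v" by (simp add: basis_vec_def split: if_splits)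
  with w show "walk V E (degree p) u v" "\<forall>k<degree p. \<not> walk V E k u v" by auto
qed

subsection \<open>The component of u in X minus v\<close>

lemma comp_minus_subset: "comp_minus V E v u \<subseteq> V - {v}"
  unfolding comp_minus_def using walk_in by fastforce

lemma comp_minus_closed:
  assumes "i \<in> comp_minus V E v u" "j \<in> V - {v}" "E i j"
  shows "j \<in> comp_minus V E v u"
proof -
  obtain k where "walk (V - {v}) E k u i" using assms(1) unfolding comp_minus_def by blast
  moreover have "walk (V - {v}) E 1 i j" using assms comp_minus_subset[of V E v u] by auto
  ultimately show ?thesis unfolding comp_minus_def by (blast intro: walk_append)
qed

lemma walk_comp_minus: "walk (V - {v}) E k u x \<Longrightarrow> walk (comp_minus V E v u) E k u x"
proof (induction k arbitrary: x)
  case 0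
  then show ?case by (auto simp: comp_minus_def intro: exI[of _ 0])
next
  case (Suc k)
  then obtain z where "walk (V - {v}) E k u z" "E z x" "x \<in> V - {v}"
    unfolding walk_snoc by blast
  moreover have "x \<in> comp_minus V E v u" using Suc.prems unfolding comp_minus_def by blast
  ultimately show ?case using Suc.IH unfolding walk_snoc by blast
qed

lemma walk_avoiding:
  assumes "\<forall>k<d. \<not> walk V E k u v" "walk V E k u x" "k < d"
  shows "walk (V - {v}) E k u x"
  using assms(2,3)
proof (induction k arbitrary: x)
  case 0
  then show ?case using assms(1) by auto
next
  case (Suc k)
  then obtain z where "walk V E k u z" "E z x" "x \<in> V" unfolding walk_snoc by blast
  moreover have "x \<noteq> v" using Suc.prems assms(1) by auto
  moreover have "walk (V - {v}) E k u z" using Suc.IH \<open>walk V E k u z\<close> Suc.prems(2) by simp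
  ultimately show ?case unfolding walk_snoc by auto
qed

text \<open>Walks from u of length at most d = dist(u, v) that end in X' never pass through v,
  so up to that length A and A(X') produce the same walk counts on X'.\<close>
lemma funpow_adj_comp_minus:
  assumes graph: "simple_graph V E" and "u \<in> V"
    and far: "\<forall>k<d. \<not> walk V E k u v" and "k \<le> d" and "i \<in> comp_minus V E v u"
  shows "(mvec (comp_minus V E v u) (adj E) ^^ k) (basis_vec (comp_minus V E v u) u) i
       = (mvec V (adj E) ^^ k) (basis_vec V u) i"
  using assms(4,5)
proof (induction k arbitrary: i)
  case 0
  then show ?case using comp_minus_subset[of V E v u] \<open>u \<in> V\<close> by (auto simp: basis_vec_def)
next
  case (Suc k)
  let ?V' = "comp_minus V E v u"
  let ?N = "(mvec V (adj E) ^^ k) (basis_vec V u)"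
  let ?N' = "(mvec ?V' (adj E) ^^ k) (basis_vec ?V' u)"
  have "finite V" "\<forall>x y. E x y \<longrightarrow> E y x" using graph by (auto simp: simple_graph_def)
  have "?V' \<subseteq> V" using comp_minus_subset[of V E v u] by blast
  then have "i \<in> V" using Suc.prems(2) by blast
  have "\<not> walk V E k v u"
    using far Suc.prems(1) walk_sym[OF \<open>\<forall>x y. E x y \<longrightarrow> E y x\<close>, of V k v u] by auto
  then have "?N v = 0"
    using funpow_adj_basis_vec[OF \<open>finite V\<close>, where E = E and k = k and u = u and i = v] by auto
  have "(\<Sum>j\<in>?V'. adj E i j * ?N' j) = (\<Sum>j\<in>?V'. adj E i j * ?N j)"
  proof (rule sum.cong[OF refl])
    fix j assume "j \<in> ?V'"
    then show "adj E i j * ?N' j = adj E i j * ?N j" using Suc.IH[of j] Suc.prems(1) by simp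
  qed
  also have "\<dots> = (\<Sum>j\<in>V. adj E i j * ?N j)"
  proof (rule sum.mono_neutral_left[OF \<open>finite V\<close>])
    show "?V' \<subseteq> V" by fact
    show "\<forall>j\<in>V - ?V'. adj E i j * ?N j = 0"
    proof
      fix j assume j: "j \<in> V - ?V'"
      show "adj E i j * ?N j = 0"
      proof (cases "E i j")
        case True
        have "j = v"
        proof (rule ccontr)
          assume "j \<noteq> v"
          then have "j \<in> ?V'" using comp_minus_closed[OF Suc.prems(2) _ True] j by simp
          with j show False by simp
        qed
        then show ?thesis using \<open>?N v = 0\<close> by simp
      qed (simp add: adj_def)
    qed
  qed
  finally show ?case
    using Suc.prems(2) \<open>i \<in> V\<close>
    by (simp add: mvec_def[of ?V' "adj E" ?N'] mvec_def[of V "adj E" ?N])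
qed

lemma comp_minus_annihilates:
  assumes graph: "simple_graph V E" and "u \<in> V"
    and far: "\<forall>k<degree p. \<not> walk V E k u v"
    and image: "poly_mvec V (adj E) p (basis_vec V u) = basis_vec V v"
  shows "annihilates (comp_minus V E v u) E u p"
  unfolding annihilates_def
proof
  fix i
  let ?V' = "comp_minus V E v u"
  show "poly_mvec ?V' (adj E) p (basis_vec ?V' u) i = 0"
  proof (cases "i \<in> ?V'")
    case True
    have "poly_mvec ?V' (adj E) p (basis_vec ?V' u) i = poly_mvec V (adj E) p (basis_vec V u) i"
      unfolding poly_mvec_def using funpow_adj_comp_minus[OF graph \<open>u \<in> V\<close> far _ True] by simp
    also have "\<dots> = 0"
      using True comp_minus_subset[of V E v u] unfolding image by (auto simp: basis_vec_def)
    finally show ?thesis .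
  next
    case False
    then show ?thesis
      using supported_on_poly_mvec[OF supported_on_basis_vec[of ?V' u], of "adj E" p]
      by (simp add: supported_on_def)
  qed
qed

lemma comp_minus_annihilator_degree:
  assumes graph: "simple_graph V E"
    and path: "walk V E d u v" and far: "\<forall>k<d. \<not> walk V E k u v"
    and "q \<noteq> 0" and "annihilates (comp_minus V E v u) E u q"
  shows "d \<le> degree q"
proof (rule ccontr)
  let ?V' = "comp_minus V E v u"
  assume "\<not> d \<le> degree q"
  then obtain w where w: "walk V E (degree q) u w" "\<forall>k<degree q. \<not> walk V E k u w"
    using geodesic_split[OF path far, of "degree q"] by auto
  have "?V' \<subseteq> V" using comp_minus_subset[of V E v u] by blast
  then have "finite ?V'" using graph finite_subset by (auto simp: simple_graph_def)
  have "walk (V - {v}) E (degree q) u w"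
    using walk_avoiding[OF far w(1)] \<open>\<not> d \<le> degree q\<close> by simp
  then have "walk ?V' E (degree q) u w" by (rule walk_comp_minus)
  moreover have "\<forall>k<degree q. \<not> walk ?V' E k u w"
    using w(2) walk_mono[OF _ \<open>?V' \<subseteq> V\<close>] by blast
  ultimately have "poly_mvec ?V' (adj E) q (basis_vec ?V' u) w \<noteq> 0"
    using graph \<open>finite ?V'\<close> \<open>q \<noteq> 0\<close>
    by (intro poly_mvec_adj_geodesic_end) (auto simp: simple_graph_def)
  with \<open>annihilates ?V' E u q\<close> show False by (simp add: annihilates_def)
qed

lemma vertex_minpoly_comp_minus:
  assumes graph: "simple_graph V E" and "u \<in> V"
    and path: "walk V E (degree p) u v" and far: "\<forall>k<degree p. \<not> walk V E k u v"
    and image: "poly_mvec V (adj E) p (basis_vec V u) = basis_vec V v"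
  shows "\<exists>c. c \<noteq> 0 \<and> vertex_minpoly (comp_minus V E v u) E u (smult c p)"
proof -
  have "p \<noteq> 0"
    using fun_cong[OF image, of v] walk_in[OF path] by (auto simp: basis_vec_def)
  define c where "c = inverse (lead_coeff p)"
  have "c \<noteq> 0" using \<open>p \<noteq> 0\<close> by (simp add: c_def)
  moreover have "vertex_minpoly (comp_minus V E v u) E u (smult c p)"
    unfolding vertex_minpoly_def
  proof (intro conjI allI impI)
    show "lead_coeff (smult c p) = 1" using \<open>p \<noteq> 0\<close> by (simp add: c_def)
    show "annihilates (comp_minus V E v u) E u (smult c p)"
      using comp_minus_annihilates[OF graph \<open>u \<in> V\<close> far image]
      by (simp add: annihilates_def poly_mvec_smult)
    fix q assume q: "lead_coeff q = 1 \<and> annihilates (comp_minus V E v u) E u q"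
    then have "q \<noteq> 0" by auto
    with q show "degree (smult c p) \<le> degree q"
      using comp_minus_annihilator_degree[OF graph path far] \<open>c \<noteq> 0\<close> by simp
  qed
  ultimately show ?thesis by blast
qed

lemma eig_support_eq_spectral_support:
  "eig_support V E u = spectral_support V (adj E) (basis_vec V u)"
  by (simp add: eig_support_def spectral_support_def)

lemma strongly_cospectral_eig_support_subset:
  assumes "strongly_cospectral V E u v"
  shows "eig_support V E v \<subseteq> eig_support V E u"
proof
  fix \<theta> assume "\<theta> \<in> eig_support V E v"
  then have "is_eigenvalue V (adj E) \<theta>" "eigproj V (adj E) \<theta> (basis_vec V v) \<noteq> (\<lambda>_. 0)"
    by (simp_all add: eig_support_def)
  moreover from assms this(1)
  have "eigproj V (adj E) \<theta> (basis_vec V u) = eigproj V (adj E) \<theta> (basis_vec V v) \<or>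
      eigproj V (adj E) \<theta> (basis_vec V v) = (\<lambda>i. - eigproj V (adj E) \<theta> (basis_vec V u) i)"
    by (simp add: strongly_cospectral_def)
  ultimately show "\<theta> \<in> eig_support V E u"
    by (auto simp: eig_support_def)
qed

theorem lemma3p4:
  fixes V :: "'a set" and E :: "'a \<Rightarrow> 'a \<Rightarrow> bool" and u v :: 'a
    and \<sigma> :: "real \<Rightarrow> real" and p :: "real poly"
  assumes "simple_graph V E" and "connected_graph V E"
    and "u \<in> V" and "v \<in> V" and "u \<noteq> v"
    and "spectrally_extremal V E u"
    and "strongly_cospectral V E u v"
    and "\<forall>\<theta>\<in>eig_support V E u. (\<sigma> \<theta> = 1 \<or> \<sigma> \<theta> = -1) \<and>
           eigproj V (adj E) \<theta> (basis_vec V v) = (\<lambda>i. \<sigma> \<theta> * eigproj V (adj E) \<theta> (basis_vec V u) i)"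
    and "\<forall>\<theta>\<in>eig_support V E u. poly p \<theta> = \<sigma> \<theta>"
    and "\<forall>q. (\<forall>\<theta>\<in>eig_support V E u. poly q \<theta> = \<sigma> \<theta>) \<longrightarrow> degree p \<le> degree q"
  shows "\<exists>c. c \<noteq> 0 \<and> vertex_minpoly (comp_minus V E v u) E u (smult c p)"
proof -
  have fin: "finite V" and sym: "symmetric_on V (adj E)"
    using assms(1) by (auto simp: simple_graph_def symmetric_on_def adj_def)
  note decomp_u = spectral_decomposition[OF fin sym supported_on_basis_vec[of V u],
      folded eig_support_eq_spectral_support]
  have image: "poly_mvec V (adj E) p (basis_vec V u) = basis_vec V v"
    using strongly_cospectral_eig_support_subset[OF assms(7)] assms(8,9)
    by (intro poly_mvec_eq_if_eigproj_scaled[OF fin sym supported_on_basis_vec supported_on_basis_vec])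
      (simp_all add: eig_support_eq_spectral_support)
  obtain q where "degree q \<le> card (eig_support V E u) - 1" "\<forall>\<theta>\<in>eig_support V E u. poly q \<theta> = \<sigma> \<theta>"
    using interpolating_poly_exists[OF decomp_u(1)] by blast
  with assms(10) have "degree p \<le> card (eig_support V E u) - 1" by fastforce
  then have "degree p \<le> eccentricity V E u"
    using assms(6) by (simp add: spectrally_extremal_def dual_degree_def)
  from geodesic_to_image_vertex[OF assms(1-4) image this]
  show ?thesis by (rule vertex_minpoly_comp_minus[OF assms(1,3) _ _ image])
qed

end
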